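(* Let $t\ge 0$ be an integer and $p$ an integer with $1\le p\le\left\lfloor\frac{t+5}{4}\right\rfloor$; set $m=t+3-2p$. Let $r_1<r_2<\cdots<r_p$ be positive real numbers and $R=\{r_1,\dots,r_p\}$. For integers $k,j$ let $$b_{k,j}=\left(r_k\cos\left(\tfrac{2j+k}{m}\pi\right),\ r_k\sin\left(\tfrac{2j+k}{m}\pi\right)\right),$$ and let $\mathcal B=\{b_{k,j}:1\le j\le m,\ 1\le k\le p\}$. Define $w:\mathcal B\to\mathbb{R}$ by $w(b_{k,j})=\frac{1}{r_1^m}$ if $k=1$, and $$w(b_{k,j})=(-1)^k\frac{1}{r_k^m}\prod_{2\le l\le p,\ l\ne k}\frac{r_1^2-r_l^2}{r_k^2-r_l^2}\quad\text{if }2\le k\le p.$$ Then $w$ takes only positive values, $\mathcal B$ is antipodal when $t$ is odd, and $(\mathcal B,w)$ is a tight Euclidean $t$-design in $\mathbb{R}^2$ with norm spectrum $R$.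
   Context: For $r>0$, $S_r^{n-1}\subset\mathbb{R}^n$ is the sphere of radius $r$ centered at the origin and $\overline{f}_{S_r^{n-1}}$ the average of $f$ over it with respect to surface measure. For a finite $\mathcal X\subset\mathbb{R}^n\setminus\{\mathbf 0\}$ with norm spectrum $R=\{\|\mathbf x\|:\mathbf x\in\mathcal X\}$ and weight function $w:\mathcal X\to\mathbb{R}_{>0}$ with $W_r=\sum_{\|\mathbf x\|=r}w(\mathbf x)$, $(\mathcal X,w)$ is a Euclidean $t$-design if $\sum_{r\in R}W_r\overline{f}_{S_r^{n-1}}=\sum_{\mathbf x\in\mathcal X}w(\mathbf x)f(\mathbf x)$ for all real polynomials $f$ of total degree $\le t$. A set is antipodal if $\mathbf x\in\mathcal X\Rightarrow-\mathbf x\in\mathcal X$ (for weighted sets also $w(-\mathbf x)=w(\mathbf x)$). With $d(s)=\binom{s+n-1}{n-1}$ (and $d(s)=0$ for $s<0$), $N_k=d\left(\lfloor t/2\rfloor+2-2k\right)+d\left(\lfloor (t-1)/2\rfloor+2-2k\right)$ and $N(n,p,t)=\sum_{k=1}^pN_k$. A Euclidean $t$-design in $\mathbb{R}^n$ whose norm spectrum has $p$ elements is called tight if it has exactly $N(n,p,t)$ points. *)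

theory Defs
  imports "HOL-Analysis.Analysis"
begin

definition pt2 :: "real \<Rightarrow> real \<Rightarrow> real ^ 2" where
  "pt2 a b = (\<chi> i. if i = 1 then a else b)"

(* A real polynomial of total degree \<le> t on R^2, given by its coefficients c i j
   of the monomials x^i y^j with i + j \<le> t. *)
definition poly2 :: "nat \<Rightarrow> (nat \<Rightarrow> nat \<Rightarrow> real) \<Rightarrow> real ^ 2 \<Rightarrow> real" where
  "poly2 t c x = (\<Sum>i\<le>t. \<Sum>j\<le>t - i. c i j * (x $ 1) ^ i * (x $ 2) ^ j)"

(* Average of f over the circle S_r^1 of radius r w.r.t. arc length (surface measure). *)
definition circle_avg :: "real \<Rightarrow> (real ^ 2 \<Rightarrow> real) \<Rightarrow> real" where
  "circle_avg r f = integral {0..2*pi} (\<lambda>\<theta>. f (pt2 (r * cos \<theta>) (r * sin \<theta>))) / (2 * pi)"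

definition Wr :: "(real ^ 2) set \<Rightarrow> (real ^ 2 \<Rightarrow> real) \<Rightarrow> real \<Rightarrow> real" where
  "Wr X w r = (\<Sum>x\<in>{x\<in>X. norm x = r}. w x)"

definition euclidean_design2 :: "(real ^ 2) set \<Rightarrow> (real ^ 2 \<Rightarrow> real) \<Rightarrow> nat \<Rightarrow> bool" where
  "euclidean_design2 X w t \<longleftrightarrow>
     finite X \<and> 0 \<notin> X \<and> (\<forall>x\<in>X. w x > 0) \<and>
     (\<forall>c. (\<Sum>r\<in>norm ` X. Wr X w r * circle_avg r (poly2 t c)) = (\<Sum>x\<in>X. w x * poly2 t c x))"

definition antipodal_w :: "(real ^ 2) set \<Rightarrow> (real ^ 2 \<Rightarrow> real) \<Rightarrow> bool" where
  "antipodal_w X w \<longleftrightarrow> (\<forall>x\<in>X. -x \<in> X \<and> w (-x) = w x)"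

definition dfun :: "nat \<Rightarrow> int \<Rightarrow> nat" where
  "dfun n s = (if s < 0 then 0 else (nat s + n - 1) choose (n - 1))"

definition Nk :: "nat \<Rightarrow> nat \<Rightarrow> int \<Rightarrow> nat" where
  "Nk n t k = dfun n (\<lfloor>real t / 2\<rfloor> + 2 - 2 * k) + dfun n (\<lfloor>(real t - 1) / 2\<rfloor> + 2 - 2 * k)"

definition Nbound :: "nat \<Rightarrow> nat \<Rightarrow> nat \<Rightarrow> nat" where
  "Nbound n p t = (\<Sum>k=1..p. Nk n t (int k))"

definition tight_design2 :: "(real ^ 2) set \<Rightarrow> (real ^ 2 \<Rightarrow> real) \<Rightarrow> nat \<Rightarrow> bool" where
  "tight_design2 X w t \<longleftrightarrow> euclidean_design2 X w t \<and> card X = Nbound 2 (card (norm ` X)) t"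

end

theory Submission
  imports Defs "HOL-Computational_Algebra.Polynomial"
begin

text \<open>On a ring of \<open>m\<close> equally spaced points of radius \<open>\<rho>\<close>, a monomial \<open>x^i y^j\<close> with
  \<open>i + j < 2m\<close> sums to \<open>m\<close> times its circle average plus an aliasing error from the Fourier
  frequencies \<open>\<plusminus>m\<close>; this error is proportional to \<open>\<rho>^(i+j)\<close> and only occurs when \<open>i + j = m + 2s\<close>.
  Rotating ring \<open>k\<close> by \<open>k\<pi>/m\<close> gives the error the sign \<open>(-1)^k\<close>, so the weighted rings form a
  \<open>t\<close>-design as soon as \<open>\<Sum>\<^sub>k (-1)^k w\<^sub>k r\<^sub>k^(m+2s) = 0\<close> for \<open>s \<le> p - 2\<close>. For the given weights this sum
  is \<open>-r\<^sub>1^(2s)\<close> plus the Lagrange interpolant of \<open>y^s\<close> at the nodes \<open>r\<^sub>l\<^sup>2\<close> (\<open>2 \<le> l \<le> p\<close>) evaluated at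
  \<open>r\<^sub>1\<^sup>2\<close>, hence zero. The weights are positive because exactly \<open>k - 2\<close> factors of their product
  are negative, and \<open>p m = N(2, p, t)\<close> gives tightness.\<close>

section \<open>Trigonometric sums and integrals\<close>

lemma has_integral_cis_int_mult:
  fixes n :: int
  assumes "n \<noteq> 0"
  shows "((\<lambda>\<theta>. cis (of_int n * \<theta>)) has_integral 0) {0..2*pi}"
proof -
  define F where "F = (\<lambda>\<theta>::real. cis (of_int n * \<theta>) / (\<i> * of_int n))"
  have "(F has_vector_derivative cis (of_int n * \<theta>)) (at \<theta> within {0..2*pi})" for \<theta>
  proof -
    have "((\<lambda>\<theta>. cis (of_int n * \<theta>)) has_vector_derivative (of_int n * (\<i> * cis (of_int n * \<theta>))))
          (at \<theta> within {0..2*pi})"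
      unfolding has_vector_derivative_def
      by (rule has_derivative_eq_rhs, (rule derivative_eq_intros)+) (auto simp: scaleR_conv_of_real mult_ac)
    from has_vector_derivative_divide[OF this, of "\<i> * of_int n"]
    show ?thesis
      unfolding F_def using assms by simp
  qed
  then have "((\<lambda>\<theta>. cis (of_int n * \<theta>)) has_integral (F (2*pi) - F 0)) {0..2*pi}"
    by (intro fundamental_theorem_of_calculus) auto
  moreover have "cis (of_int n * (2*pi)) = 1"
    using cis_multiple_2pi[of "of_int n"] by (simp add: mult.commute mult.left_commute)
  ultimately show ?thesis by (simp add: F_def)
qed

lemma has_integral_cis_sum:
  fixes \<kappa> :: "'a \<Rightarrow> complex"
  assumes "finite Q"
  shows "((\<lambda>\<theta>. \<Sum>q\<in>Q. \<kappa> q * cis (of_int (e q) * \<theta>)) has_integral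
          2*pi * (\<Sum>q\<in>{q\<in>Q. e q = 0}. \<kappa> q)) {0..2*pi}"
proof -
  have "((\<lambda>\<theta>. \<kappa> q * cis (of_int (e q) * \<theta>)) has_integral (if e q = 0 then 2*pi * \<kappa> q else 0)) {0..2*pi}"
    for q
    using has_integral_const_real[of "\<kappa> q" 0 "2*pi"] has_integral_mult_right[OF has_integral_cis_int_mult]
    by (auto simp: scaleR_conv_of_real)
  then have "((\<lambda>\<theta>. \<Sum>q\<in>Q. \<kappa> q * cis (of_int (e q) * \<theta>)) has_integral
          (\<Sum>q\<in>Q. if e q = 0 then 2*pi * \<kappa> q else 0)) {0..2*pi}"
    by (intro has_integral_sum assms)
  then show ?thesis
    using assms by (simp add: sum.inter_filter sum_distrib_left if_distrib cong: if_cong)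
qed

definition ring_angle :: "nat \<Rightarrow> nat \<Rightarrow> nat \<Rightarrow> real" where
  "ring_angle m k j = (2 * real j + real k) / real m * pi"

lemma sum_cis_ring_angle:
  fixes n :: int
  assumes m: "m > 0" and n: "\<bar>n\<bar> < 2 * int m"
  shows "(\<Sum>j\<in>{1..m}. cis (of_int n * ring_angle m k j)) =
     (if n = 0 then of_nat m else if int m dvd n then of_nat m * (-1)^k else 0)"
proof -
  define \<omega> where "\<omega> = cis (2 * pi * of_int n / real m)"
  have "cis (of_int n * ring_angle m k j) = cis (of_int n * real k * pi / real m) * \<omega> ^ j" for j
    unfolding \<omega>_def ring_angle_def Complex.DeMoivre cis_mult
    by (rule arg_cong[where f=cis]) (simp add: field_simps add_divide_distrib)
  then have sum: "(\<Sum>j\<in>{1..m}. cis (of_int n * ring_angle m k j)) =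
      cis (of_int n * real k * pi / real m) * (\<Sum>j\<in>{1..m}. \<omega> ^ j)"
    by (simp add: sum_distrib_left)
  show ?thesis
  proof (cases "int m dvd n")
    case True
    then obtain s where ns: "n = int m * s" by auto
    have "\<omega> = 1"
      unfolding \<omega>_def ns using m cis_multiple_2pi[of "of_int s"] by (simp add: field_simps)
    moreover have "cis (of_int n * real k * pi / real m) = (if n = 0 then 1 else (-1)^k)"
    proof (cases "n = 0")
      case False
      then have "s = 1 \<or> s = -1"
        using n m ns by (auto simp: abs_mult abs_less_iff)
      then have "cis (of_int n * real k * pi / real m) = cis (of_int s * (real k * pi))"
        using m ns by (intro arg_cong[where f=cis]) (auto simp: field_simps)
      also have "\<dots> = (-1)^k"
        using \<open>s = 1 \<or> s = -1\<close> by (auto simp: complex_eq_iff)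
      finally show ?thesis using False by simp
    qed simp
    ultimately show ?thesis using True unfolding sum by simp
  next
    case False
    have "\<omega> \<noteq> 1"
    proof
      assume "\<omega> = 1"
      then have "cos (2 * pi * of_int n / real m) = 1"
        unfolding \<omega>_def by (metis cis.sel(1) one_complex.sel(1))
      then obtain l :: int where "2 * pi * of_int n / real m = of_int l * 2 * pi"
        by (auto simp: cos_one_2pi_int)
      then have "real_of_int n = real m * of_int l" using m by (simp add: field_simps)
      then have "n = int m * l" by (metis of_int_eq_iff of_int_mult of_int_of_nat_eq)
      then show False using False by auto
    qed
    moreover have "\<omega> ^ m = 1"
      unfolding \<omega>_def Complex.DeMoivre using m cis_multiple_2pi[of "of_int n"] by (simp add: field_simps)
    ultimately have "(\<Sum>j\<in>{1..m}. \<omega> ^ j) = 0"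
      using m by (simp add: sum_gp power_Suc)
    then show ?thesis using False unfolding sum by auto
  qed
qed

lemma sum_cis_sum_ring_angle:
  fixes \<kappa> :: "'a \<Rightarrow> complex"
  assumes Q: "finite Q" and m: "m > 0" and e: "\<And>q. q \<in> Q \<Longrightarrow> \<bar>e q\<bar> < 2 * int m"
  shows "(\<Sum>j\<in>{1..m}. \<Sum>q\<in>Q. \<kappa> q * cis (of_int (e q) * ring_angle m k j)) =
     of_nat m * (\<Sum>q\<in>{q\<in>Q. e q = 0}. \<kappa> q) +
     of_nat m * (-1)^k * (\<Sum>q\<in>{q\<in>Q. e q \<noteq> 0 \<and> int m dvd e q}. \<kappa> q)"
proof -
  have "(\<Sum>j\<in>{1..m}. \<Sum>q\<in>Q. \<kappa> q * cis (of_int (e q) * ring_angle m k j)) =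
     (\<Sum>q\<in>Q. \<kappa> q * (\<Sum>j\<in>{1..m}. cis (of_int (e q) * ring_angle m k j)))"
    by (subst sum.swap) (simp add: sum_distrib_left)
  also have "\<dots> = (\<Sum>q\<in>Q. of_nat m * (if e q = 0 then \<kappa> q else 0) +
                  of_nat m * (-1)^k * (if e q \<noteq> 0 \<and> int m dvd e q then \<kappa> q else 0))"
    using sum_cis_ring_angle[OF m e] by (intro sum.cong refl) auto
  finally show ?thesis
    using Q by (simp add: sum.distrib sum.inter_filter flip: sum_distrib_left)
qed

lemma inj_on_cis_ring_angle:
  assumes m: "m > 0"
  shows "inj_on (\<lambda>j. cis (ring_angle m k j)) {1..m}"
proof (rule inj_onI)
  fix j j' assume j: "j \<in> {1..m}" "j' \<in> {1..m}" and eq: "cis (ring_angle m k j) = cis (ring_angle m k j')"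
  have "cos (ring_angle m k j - ring_angle m k j') = 1"
    using eq by (simp add: cos_diff complex_eq_iff flip: power2_eq_square)
  then obtain n :: int where "ring_angle m k j - ring_angle m k j' = of_int n * 2 * pi"
    by (auto simp: cos_one_2pi_int)
  moreover have "ring_angle m k j - ring_angle m k j' = (real j - real j') / real m * (2 * pi)"
    by (simp add: ring_angle_def diff_divide_distrib [symmetric] algebra_simps)
  ultimately have "(real j - real j') / real m * (2 * pi) = of_int n * (2 * pi)"
    by (simp add: mult.assoc)
  then have "(real j - real j') / real m = of_int n"
    by (metis mult_right_cancel pi_neq_zero mult_eq_0_iff zero_neq_numeral)
  then have "real j - real j' = of_int n * real m"
    using m by (simp add: field_simps)
  then have n: "int j - int j' = n * int m"
    by (metis of_int_eq_iff of_int_mult of_int_of_nat_eq of_int_diff)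
  have "\<bar>int j - int j'\<bar> < int m"
    using j by auto
  then have "int m * \<bar>n\<bar> < int m * 1"
    by (simp add: n abs_mult mult.commute)
  then have "n = 0"
    using m by (simp only: mult_less_cancel_left) simp
  then show "j = j'"
    using n by simp
qed

lemma cos_power_cis_expansion:
  "complex_of_real (cos \<theta> ^ i) =
     (\<Sum>a\<le>i. of_nat (i choose a) / 2^i * cis (of_int (2 * int a - int i) * \<theta>))"
proof -
  have cos_cis: "complex_of_real (cos \<theta>) = (cis \<theta> + cis (-\<theta>)) / 2"
    by (simp add: complex_eq_iff)
  have "complex_of_real (cos \<theta> ^ i) = (cis \<theta> + cis (-\<theta>))^i / 2^i"
    by (simp add: cos_cis power_divide)
  also have "\<dots> = (\<Sum>a\<le>i. of_nat (i choose a) * cis \<theta> ^ a * cis (-\<theta>) ^ (i - a)) / 2^i"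
    by (simp add: binomial_ring)
  also have "\<dots> = (\<Sum>a\<le>i. of_nat (i choose a) / 2^i * cis (of_int (2 * int a - int i) * \<theta>))"
    unfolding sum_divide_distrib Complex.DeMoivre
    by (intro sum.cong refl) (simp add: cis_mult algebra_simps of_nat_diff)
  finally show ?thesis .
qed

lemma sin_power_cis_expansion:
  "complex_of_real (sin \<theta> ^ j) =
     (\<Sum>b\<le>j. of_nat (j choose b) * (-1)^(j-b) / (2*\<i>)^j * cis (of_int (2 * int b - int j) * \<theta>))"
proof -
  have "cis \<theta> + - cis (-\<theta>) = (2*\<i>) * complex_of_real (sin \<theta>)"
    by (simp add: complex_eq_iff)
  then have "complex_of_real (sin \<theta>) = (cis \<theta> + - cis (-\<theta>)) / (2*\<i>)"
    by simp
  then have "complex_of_real (sin \<theta> ^ j) = (\<Sum>b\<le>j. of_nat (j choose b) * cis \<theta> ^ b * (- cis (-\<theta>)) ^ (j - b)) / (2*\<i>)^j"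
    by (simp only: power_divide of_real_power binomial_ring)
  also have "\<dots> = (\<Sum>b\<le>j. of_nat (j choose b) * (-1)^(j-b) / (2*\<i>)^j * cis (of_int (2 * int b - int j) * \<theta>))"
    unfolding sum_divide_distrib power_minus[of "cis (-\<theta>)"] Complex.DeMoivre
    by (intro sum.cong refl) (simp add: cis_mult algebra_simps of_nat_diff)
  finally show ?thesis .
qed

definition trig_coeff :: "nat \<Rightarrow> nat \<Rightarrow> nat \<times> nat \<Rightarrow> complex" where
  "trig_coeff i j q =
     of_nat (i choose fst q) / 2^i * (of_nat (j choose snd q) * (-1)^(j - snd q) / (2*\<i>)^j)"

definition trig_freq :: "nat \<Rightarrow> nat \<Rightarrow> nat \<times> nat \<Rightarrow> int" where
  "trig_freq i j q = 2 * int (fst q) + 2 * int (snd q) - int i - int j"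

lemma cos_sin_power_cis_expansion:
  "complex_of_real (cos \<theta> ^ i * sin \<theta> ^ j) =
     (\<Sum>q\<in>{..i}\<times>{..j}. trig_coeff i j q * cis (of_int (trig_freq i j q) * \<theta>))"
proof -
  have "complex_of_real (cos \<theta> ^ i * sin \<theta> ^ j) =
      (\<Sum>a\<le>i. \<Sum>b\<le>j. (of_nat (i choose a) / 2^i * cis (of_int (2 * int a - int i) * \<theta>)) *
        (of_nat (j choose b) * (-1)^(j-b) / (2*\<i>)^j * cis (of_int (2 * int b - int j) * \<theta>)))"
    unfolding of_real_mult cos_power_cis_expansion sin_power_cis_expansion by (rule sum_product)
  also have "\<dots> = (\<Sum>q\<in>{..i}\<times>{..j}. trig_coeff i j q * cis (of_int (trig_freq i j q) * \<theta>))"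
    unfolding sum.cartesian_product trig_coeff_def trig_freq_def
    by (intro sum.cong refl) (auto simp: cis_mult algebra_simps)
  finally show ?thesis .
qed

lemma abs_trig_freq_le: "q \<in> {..i}\<times>{..j} \<Longrightarrow> \<bar>trig_freq i j q\<bar> \<le> int (i + j)"
  unfolding trig_freq_def by auto

definition circle_mean_coeff :: "nat \<Rightarrow> nat \<Rightarrow> real" where
  "circle_mean_coeff i j = Re (\<Sum>q\<in>{q\<in>{..i}\<times>{..j}. trig_freq i j q = 0}. trig_coeff i j q)"

definition alias_coeff :: "nat \<Rightarrow> nat \<Rightarrow> nat \<Rightarrow> real" where
  "alias_coeff m i j =
     Re (\<Sum>q\<in>{q\<in>{..i}\<times>{..j}. trig_freq i j q \<noteq> 0 \<and> int m dvd trig_freq i j q}. trig_coeff i j q)"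

lemma has_integral_cos_sin_power:
  "((\<lambda>\<theta>. cos \<theta> ^ i * sin \<theta> ^ j) has_integral (2 * pi * circle_mean_coeff i j)) {0..2*pi}"
proof -
  have "((\<lambda>\<theta>. \<Sum>q\<in>{..i}\<times>{..j}. trig_coeff i j q * cis (of_int (trig_freq i j q) * \<theta>)) has_integral
          2*pi * (\<Sum>q\<in>{q\<in>{..i}\<times>{..j}. trig_freq i j q = 0}. trig_coeff i j q)) {0..2*pi}"
    by (rule has_integral_cis_sum) simp
  from has_integral_linear[OF this bounded_linear_Re] show ?thesis
    by (simp add: o_def circle_mean_coeff_def flip: cos_sin_power_cis_expansion)
qed

lemma sum_cos_sin_power_ring_angle:
  assumes m: "m > 0" and deg: "i + j < 2 * m"
  shows "(\<Sum>l\<in>{1..m}. cos (ring_angle m k l) ^ i * sin (ring_angle m k l) ^ j)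
      = real m * (circle_mean_coeff i j + (-1)^k * alias_coeff m i j)"
proof -
  have "complex_of_real (\<Sum>l\<in>{1..m}. cos (ring_angle m k l) ^ i * sin (ring_angle m k l) ^ j) =
     (\<Sum>l\<in>{1..m}. \<Sum>q\<in>{..i}\<times>{..j}. trig_coeff i j q * cis (of_int (trig_freq i j q) * ring_angle m k l))"
    by (simp only: of_real_sum cos_sin_power_cis_expansion)
  also have "\<dots> = of_nat m * (\<Sum>q\<in>{q\<in>{..i}\<times>{..j}. trig_freq i j q = 0}. trig_coeff i j q) +
     of_nat m * (-1)^k *
       (\<Sum>q\<in>{q\<in>{..i}\<times>{..j}. trig_freq i j q \<noteq> 0 \<and> int m dvd trig_freq i j q}. trig_coeff i j q)"
    using abs_trig_freq_le deg by (intro sum_cis_sum_ring_angle m) force+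
  finally have "(\<Sum>l\<in>{1..m}. cos (ring_angle m k l) ^ i * sin (ring_angle m k l) ^ j) = Re \<dots>"
    by (metis Re_complex_of_real)
  then show ?thesis
    unfolding circle_mean_coeff_def alias_coeff_def by (simp add: algebra_simps)
qed

lemma alias_coeff_nonzero_degree:
  assumes m: "m > 0" and deg: "i + j < 2 * m" and nz: "alias_coeff m i j \<noteq> 0"
  obtains s where "i + j = m + 2 * s"
proof -
  have "{q\<in>{..i}\<times>{..j}. trig_freq i j q \<noteq> 0 \<and> int m dvd trig_freq i j q} \<noteq> {}"
    using nz unfolding alias_coeff_def by (metis sum.empty zero_complex.sel(1))
  then obtain q where q: "q \<in> {..i}\<times>{..j}" "trig_freq i j q \<noteq> 0" "int m dvd trig_freq i j q"
    by blast
  then obtain s where s: "trig_freq i j q = int m * s" by (auto elim: dvdE)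
  have bound: "\<bar>trig_freq i j q\<bar> \<le> int (i + j)" using abs_trig_freq_le[OF q(1)] .
  then have "int m * \<bar>s\<bar> \<le> int (i + j)"
    using s by (simp add: abs_mult)
  then have "int m * \<bar>s\<bar> < int m * 2"
    using deg by linarith
  then have "\<bar>s\<bar> < 2"
    using m by simp
  then have "s = 1 \<or> s = -1"
    using s q(2) by auto
  then have "m \<le> i + j \<and> even (i + j - m)"
    using s bound unfolding trig_freq_def by auto presburger+
  then show thesis
    using that[of "(i + j - m) div 2"] by (metis dvd_mult_div_cancel le_add_diff_inverse)
qed

section \<open>Polynomials on circles and rings\<close>

lemma pt2_nth [simp]: "pt2 a b $ 1 = a" "pt2 a b $ 2 = b"
  by (simp_all add: pt2_def)

lemma pt2_eq_iff: "pt2 a b = pt2 a' b' \<longleftrightarrow> a = a' \<and> b = b'"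
  by (metis pt2_nth)

lemma uminus_pt2: "- pt2 a b = pt2 (-a) (-b)"
  by (simp add: vec_eq_iff pt2_def)

lemma norm_pt2_polar: "\<rho> \<ge> 0 \<Longrightarrow> norm (pt2 (\<rho> * cos \<theta>) (\<rho> * sin \<theta>)) = \<rho>"
  by (simp add: norm_vec_def L2_set_def sum_2 power_mult_distrib flip: distrib_left)

lemma poly2_polar:
  "poly2 t c (pt2 (\<rho> * cos \<theta>) (\<rho> * sin \<theta>)) =
    (\<Sum>i\<le>t. \<Sum>j\<le>t - i. c i j * \<rho>^(i+j) * (cos \<theta> ^ i * sin \<theta> ^ j))"
  unfolding poly2_def by (intro sum.cong refl) (simp add: power_mult_distrib power_add)

lemma circle_avg_poly2:
  "circle_avg \<rho> (poly2 t c) = (\<Sum>i\<le>t. \<Sum>j\<le>t - i. c i j * \<rho>^(i+j) * circle_mean_coeff i j)"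
proof -
  have "((\<lambda>\<theta>. poly2 t c (pt2 (\<rho> * cos \<theta>) (\<rho> * sin \<theta>))) has_integral
       (\<Sum>i\<le>t. \<Sum>j\<le>t - i. c i j * \<rho>^(i+j) * (2 * pi * circle_mean_coeff i j))) {0..2*pi}"
    unfolding poly2_polar
    by (intro has_integral_sum finite_atMost has_integral_mult_right has_integral_cos_sin_power)
  then have "integral {0..2*pi} (\<lambda>\<theta>. poly2 t c (pt2 (\<rho> * cos \<theta>) (\<rho> * sin \<theta>))) =
       2 * pi * (\<Sum>i\<le>t. \<Sum>j\<le>t - i. c i j * \<rho>^(i+j) * circle_mean_coeff i j)"
    by (simp add: integral_unique sum_distrib_left mult_ac)
  then show ?thesis
    unfolding circle_avg_def by simp
qed

lemma sum_poly2_ring_angle: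
  assumes m: "m > 0" and t: "t < 2 * m"
  shows "(\<Sum>l\<in>{1..m}. poly2 t c (pt2 (\<rho> * cos (ring_angle m k l)) (\<rho> * sin (ring_angle m k l))))
     = (\<Sum>i\<le>t. \<Sum>j\<le>t - i.
          c i j * \<rho>^(i+j) * (real m * (circle_mean_coeff i j + (-1)^k * alias_coeff m i j)))"
proof -
  have "(\<Sum>l\<in>{1..m}. poly2 t c (pt2 (\<rho> * cos (ring_angle m k l)) (\<rho> * sin (ring_angle m k l))))
     = (\<Sum>i\<le>t. \<Sum>j\<le>t - i. c i j * \<rho>^(i+j) *
          (\<Sum>l\<in>{1..m}. cos (ring_angle m k l) ^ i * sin (ring_angle m k l) ^ j))"
    unfolding poly2_polar sum_distrib_left by (subst sum.swap) (subst (2) sum.swap, rule refl)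
  also have "\<dots> = (\<Sum>i\<le>t. \<Sum>j\<le>t - i.
          c i j * \<rho>^(i+j) * (real m * (circle_mean_coeff i j + (-1)^k * alias_coeff m i j)))"
  proof (intro sum.cong refl)
    fix i j assume "i \<in> {..t}" "j \<in> {..t - i}"
    then have "i + j < 2 * m" using t by auto
    then show "c i j * \<rho>^(i+j) * (\<Sum>l\<in>{1..m}. cos (ring_angle m k l) ^ i * sin (ring_angle m k l) ^ j) =
        c i j * \<rho>^(i+j) * (real m * (circle_mean_coeff i j + (-1)^k * alias_coeff m i j))"
      by (simp only: sum_cos_sin_power_ring_angle[OF m])
  qed
  finally show ?thesis .
qed

section \<open>The weights\<close>

lemma lagrange_interpolation_poly:
  fixes x :: "'a \<Rightarrow> 'b::field"
  assumes N: "finite N" and inj: "inj_on x N" and deg: "degree q < card N"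
  shows "(\<Sum>k\<in>N. (\<Prod>l\<in>N-{k}. (y - x l) / (x k - x l)) * poly q (x k)) = poly q y"
proof -
  define L where "L k = (\<Prod>l\<in>N-{k}. smult (1 / (x k - x l)) [:- x l, 1:])" for k
  define P where "P = (\<Sum>k\<in>N. smult (poly q (x k)) (L k))"
  have poly_L: "poly (L k) z = (\<Prod>l\<in>N-{k}. (z - x l) / (x k - x l))" for k z
    unfolding L_def by (simp add: poly_prod diff_divide_distrib)
  have poly_P: "poly P z = (\<Sum>k\<in>N. (\<Prod>l\<in>N-{k}. (z - x l) / (x k - x l)) * poly q (x k))" for z
    unfolding P_def by (simp add: poly_sum poly_L mult.commute)
  have "degree (L k) \<le> card N - 1" if "k \<in> N" for k
  proof -
    have "degree (L k) \<le> (\<Sum>l\<in>N-{k}. degree (smult (1 / (x k - x l)) [:- x l, 1:]))"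
      unfolding L_def using degree_prod_sum_le[OF finite_Diff[OF N]] by (simp only: o_def)
    also have "\<dots> \<le> (\<Sum>l\<in>N-{k}. 1)"
      by (intro sum_mono) (simp add: degree_smult_le)
    finally show ?thesis using that N by simp
  qed
  then have deg_P: "degree P \<le> card N - 1"
    unfolding P_def by (intro degree_sum_le N) (use degree_smult_le order_trans in blast)
  have interpolates: "poly P (x k0) = poly q (x k0)" if k0: "k0 \<in> N" for k0
  proof -
    have "(\<Prod>l\<in>N-{k}. (x k0 - x l) / (x k - x l)) = (if k = k0 then 1 else 0)" if "k \<in> N" for k
    proof (cases "k = k0")
      case True
      then show ?thesis using inj k0 by (auto intro!: prod.neutral simp: inj_on_eq_iff split: if_splits)
    next
      case False
      then show ?thesis using N k0 that by (auto intro!: prod_zero)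
    qed
    then have "poly P (x k0) = (\<Sum>k\<in>N. (if k = k0 then poly q (x k) else 0))"
      unfolding poly_P by (intro sum.cong) auto
    then show ?thesis
      using N k0 by simp
  qed
  have "P = q"
    by (rule poly_eqI_degree[where A = "x ` N"])
       (use interpolates deg_P deg card_image[OF inj] in auto)
  then show ?thesis using poly_P[of y] by simp
qed

lemma sgn_prod_eq_power_card_neg:
  fixes f :: "'a \<Rightarrow> 'b::linordered_idom"
  assumes "finite A" "\<And>l. l \<in> A \<Longrightarrow> f l \<noteq> 0"
  shows "sgn (prod f A) = (-1) ^ card {l\<in>A. f l < 0}"
  using assms
proof (induction A rule: finite_induct)
  case (insert a A)
  have "{l\<in>insert a A. f l < 0} = (if f a < 0 then insert a {l\<in>A. f l < 0} else {l\<in>A. f l < 0})"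
    by auto
  moreover have "sgn (f a) = (if f a < 0 then -1 else 1)"
    using insert.prems by (auto simp: sgn_if)
  ultimately show ?case
    using insert by (simp add: sgn_mult)
qed simp

lemma strict_mono_on_pos:
  fixes r :: "nat \<Rightarrow> real"
  assumes "0 < r 1" "strict_mono_on {1..p} r" "k \<in> {1..p}"
  shows "0 < r k"
  using assms by (cases "k = 1") (auto dest: strict_mono_onD[of _ _ 1 k])

lemma strict_mono_on_power2:
  fixes r :: "nat \<Rightarrow> real"
  assumes "0 < r 1" "strict_mono_on {1..p} r"
  shows "strict_mono_on {1..p} (\<lambda>k. r k ^ 2)"
proof (rule strict_mono_onI)
  fix a b assume "a \<in> {1..p}" "b \<in> {1..p}" "a < b"
  then show "r a ^ 2 < r b ^ 2"
    using strict_mono_on_pos[OF assms \<open>a \<in> {1..p}\<close>] strict_mono_onD[OF assms(2)]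
    by (intro power_strict_mono) auto
qed

definition tight_weight :: "nat \<Rightarrow> nat \<Rightarrow> (nat \<Rightarrow> real) \<Rightarrow> nat \<Rightarrow> real" where
  "tight_weight m p r k =
     (if k = 1 then 1 / r 1 ^ m
      else (-1) ^ k * (1 / r k ^ m) * (\<Prod>l\<in>{2..p} - {k}. (r 1 ^ 2 - r l ^ 2) / (r k ^ 2 - r l ^ 2)))"

lemma tight_weight_pos:
  assumes r1: "0 < r 1" and mono: "strict_mono_on {1..p} r" and k: "k \<in> {1..p}"
  shows "0 < tight_weight m p r k"
proof (cases "k = 1")
  case False
  have sq: "r a ^ 2 < r b ^ 2" if "a \<in> {1..p}" "b \<in> {1..p}" "a < b" for a b
    using strict_mono_onD[OF strict_mono_on_power2[OF r1 mono]] that by blast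
  define f where "f l = (r 1 ^ 2 - r l ^ 2) / (r k ^ 2 - r l ^ 2)" for l
  have num: "r 1 ^ 2 - r l ^ 2 < 0" if "l \<in> {2..p}" for l
    using sq[of 1 l] that by auto
  have den: "(r k ^ 2 - r l ^ 2 < 0 \<longleftrightarrow> k < l) \<and> r k ^ 2 \<noteq> r l ^ 2"
    if "l \<in> {2..p} - {k}" for l
    using sq[of k l] sq[of l k] that k by (cases k l rule: linorder_cases) auto
  have f_nz: "f l \<noteq> 0" if "l \<in> {2..p} - {k}" for l
    using num[of l] den[of l] that by (simp add: f_def)
  have "f l < 0 \<longleftrightarrow> l < k" if "l \<in> {2..p} - {k}" for l
    using num[of l] den[of l] that unfolding f_def divide_less_0_iff by auto
  then have "{l\<in>{2..p}-{k}. f l < 0} = {2..<k}"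
    using k by auto
  then have "sgn (prod f ({2..p}-{k})) = (-1) ^ (k - 2)"
    using sgn_prod_eq_power_card_neg[of "{2..p}-{k}" f] f_nz by simp
  moreover have "(-1::real) ^ k = (-1) ^ (k - 2)"
    using False k by (simp add: power_diff)
  moreover have "prod f ({2..p}-{k}) \<noteq> 0"
    using f_nz by simp
  ultimately have "(-1) ^ k * prod f ({2..p}-{k}) = \<bar>prod f ({2..p}-{k})\<bar>"
    by (simp add: abs_sgn mult.commute)
  moreover have "0 < r k"
    using strict_mono_on_pos[OF r1 mono k] .
  ultimately show ?thesis
    using False \<open>prod f ({2..p}-{k}) \<noteq> 0\<close> by (simp add: tight_weight_def f_def mult.assoc)
next
  case True
  then show ?thesis
    using r1 by (simp add: tight_weight_def)
qed

lemma tight_weight_alternating_moment: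
  assumes r1: "0 < r 1" and mono: "strict_mono_on {1..p} r" and s: "s + 2 \<le> p"
  shows "(\<Sum>k\<in>{1..p}. tight_weight m p r k * (-1)^k * r k ^ (m + 2 * s)) = 0"
proof -
  have split_power: "r k ^ (m + 2 * s) = r k ^ m * (r k ^ 2) ^ s" for k
    by (simp add: power_add power_mult)
  have "tight_weight m p r k * (-1)^k * r k ^ (m + 2 * s) =
      (\<Prod>l\<in>{2..p}-{k}. (r 1 ^ 2 - r l ^ 2) / (r k ^ 2 - r l ^ 2)) * (r k ^ 2) ^ s"
    if k: "k \<in> {2..p}" for k
  proof -
    have "r k ^ m \<noteq> 0"
      using strict_mono_on_pos[OF r1 mono, of k] k by simp
    moreover have "(-1::real)^k * (-1)^k = 1"
      by (simp flip: power_add)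
    ultimately show ?thesis
      unfolding tight_weight_def split_power using k by (simp add: field_simps)
  qed
  then have "(\<Sum>k\<in>{2..p}. tight_weight m p r k * (-1)^k * r k ^ (m + 2 * s)) =
      (\<Sum>k\<in>{2..p}. (\<Prod>l\<in>{2..p}-{k}. (r 1 ^ 2 - r l ^ 2) / (r k ^ 2 - r l ^ 2)) * poly (monom 1 s) (r k ^ 2))"
    by (simp add: poly_monom)
  also have "\<dots> = poly (monom 1 s) (r 1 ^ 2)"
  proof (rule lagrange_interpolation_poly)
    show "inj_on (\<lambda>l. r l ^ 2) {2..p}"
      using strict_mono_on_imp_inj_on[OF strict_mono_on_power2[OF r1 mono]] by (rule inj_on_subset) auto
    show "degree (monom (1::real) s) < card {2..p}"
      using s by (simp add: degree_monom_eq)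
  qed simp
  finally have "(\<Sum>k\<in>{2..p}. tight_weight m p r k * (-1)^k * r k ^ (m + 2 * s)) = (r 1 ^ 2) ^ s"
    by (simp add: poly_monom)
  moreover have "tight_weight m p r 1 * (-1)^1 * r 1 ^ (m + 2 * s) = - ((r 1 ^ 2) ^ s)"
    unfolding tight_weight_def split_power using r1 by simp
  ultimately show ?thesis
    using s by (simp add: sum.atLeast_Suc_atMost numeral_2_eq_2)
qed

section \<open>The bound N(2, p, t)\<close>

lemma Nk_dim2:
  assumes "1 \<le> k" "4 * k \<le> t + 5"
  shows "Nk 2 t (int k) = t + 5 - 4 * k"
proof -
  have floor_half: "\<lfloor>real t / 2\<rfloor> = int t div 2"
    using floor_divide_of_int_eq[of "int t" 2] by simp
  have floor_half': "\<lfloor>(real t - 1) / 2\<rfloor> = (int t - 1) div 2"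
    using floor_divide_of_int_eq[of "int t - 1" 2] by simp
  have dfun_2: "dfun 2 s = nat (s + 1)" if "s \<ge> -1" for s
    using that unfolding dfun_def by (simp add: nat_add_distrib)
  have "int t div 2 + 2 - 2 * int k \<ge> -1" "(int t - 1) div 2 + 2 - 2 * int k \<ge> -1"
    "int t div 2 + (int t - 1) div 2 = int t - 1"
    using assms by presburger+
  then show ?thesis
    unfolding Nk_def floor_half floor_half' using assms by (simp add: dfun_2)
qed

lemma Nbound_dim2:
  assumes "4 * p \<le> t + 5"
  shows "Nbound 2 p t = p * (t + 3 - 2 * p)"
  using assms
proof (induction p)
  case (Suc p)
  then obtain d where d: "t + 5 = 4 * Suc p + d"
    using le_Suc_ex by blast
  then have width: "t + 3 - 2 * p = 2 * p + 2 + d"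
    by simp
  have "Nbound 2 (Suc p) t = Nbound 2 p t + Nk 2 t (int (Suc p))"
    by (simp add: Nbound_def)
  also have "\<dots> = p * (2 * p + 2 + d) + d"
    using Suc Nk_dim2[of "Suc p" t] d width by simp
  also have "\<dots> = Suc p * (t + 3 - 2 * Suc p)"
    using d by (simp add: algebra_simps)
  finally show ?case .
qed (simp add: Nbound_def)

section \<open>Concentric rings of equally spaced points\<close>

lemma sum_swap_triangle:
  "(\<Sum>k\<in>K. \<Sum>i\<le>t. \<Sum>j\<le>t - i. F k i j) = (\<Sum>i\<le>t. \<Sum>j\<le>t - i. \<Sum>k\<in>K. F k i j)"
  by (subst sum.swap) (simp only: sum.swap[of _ K])

locale concentric_rings =
  fixes m p :: nat and r :: "nat \<Rightarrow> real"
  assumes m_pos: "0 < m"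
    and radius_pos: "k \<in> {1..p} \<Longrightarrow> 0 < r k"
    and radius_inj: "inj_on r {1..p}"
begin

definition ring_pt :: "nat \<Rightarrow> nat \<Rightarrow> real ^ 2" where
  "ring_pt k j = pt2 (r k * cos (ring_angle m k j)) (r k * sin (ring_angle m k j))"

definition rings :: "(real ^ 2) set" where
  "rings = (\<lambda>(k, j). ring_pt k j) ` ({1..p} \<times> {1..m})"

lemma norm_ring_pt: "k \<in> {1..p} \<Longrightarrow> norm (ring_pt k j) = r k"
  unfolding ring_pt_def using radius_pos by (simp add: norm_pt2_polar less_imp_le)

lemma inj_on_ring_pt: "inj_on (\<lambda>(k, j). ring_pt k j) ({1..p} \<times> {1..m})"
proof (rule inj_onI, clarify)
  fix k j k' j'
  assume k: "k \<in> {1..p}" "k' \<in> {1..p}" and j: "j \<in> {1..m}" "j' \<in> {1..m}"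
    and eq: "ring_pt k j = ring_pt k' j'"
  have "k = k'"
    using norm_ring_pt[OF k(1), of j] norm_ring_pt[OF k(2), of j'] eq k radius_inj
    by (auto dest: inj_onD)
  moreover have "cis (ring_angle m k j) = cis (ring_angle m k j')"
    using eq radius_pos[OF k(1)] \<open>k = k'\<close> by (simp add: ring_pt_def pt2_eq_iff complex_eq_iff)
  ultimately show "k = k' \<and> j = j'"
    using inj_onD[OF inj_on_cis_ring_angle[OF m_pos] _ j] by blast
qed

lemma finite_rings: "finite rings"
  by (simp add: rings_def)

lemma card_rings: "card rings = p * m"
  unfolding rings_def card_image[OF inj_on_ring_pt] by simp

lemma norm_rings: "norm ` rings = r ` {1..p}"
proof -
  have "norm ` rings = (\<lambda>(k, j). r k) ` ({1..p} \<times> {1..m})"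
    unfolding rings_def image_image by (intro image_cong refl) (auto simp: norm_ring_pt)
  also have "\<dots> = r ` {1..p}"
    using m_pos by (force simp: image_iff)
  finally show ?thesis .
qed

lemma zero_notin_rings: "0 \<notin> rings"
proof
  assume "0 \<in> rings"
  then have "0 \<in> r ` {1..p}"
    unfolding norm_rings[symmetric] by force
  then show False
    using radius_pos by fastforce
qed

lemma ring_pt_add_half_turn:
  assumes "m = 2 * h"
  shows "ring_pt k (j + h) = - ring_pt k j"
proof -
  have "ring_angle m k (j + h) = ring_angle m k j + pi"
    using assms m_pos by (simp add: ring_angle_def field_simps)
  then show ?thesis
    by (simp add: ring_pt_def uminus_pt2)
qed

end

locale weighted_rings = concentric_rings +
  fixes w :: "real ^ 2 \<Rightarrow> real" and W :: "nat \<Rightarrow> real"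
  assumes weight_ring_pt: "k \<in> {1..p} \<Longrightarrow> j \<in> {1..m} \<Longrightarrow> w (ring_pt k j) = W k"
begin

lemma antipodal_rings:
  assumes "even m"
  shows "antipodal_w rings w"
proof -
  obtain h where h: "m = 2 * h"
    using assms(1) by blast
  have opposite: "\<exists>j'\<in>{1..m}. ring_pt k j' = - ring_pt k j" if "j \<in> {1..m}" for k j
  proof (cases "j \<le> h")
    case True
    then show ?thesis
      using that h ring_pt_add_half_turn[OF h, of k j] by (intro bexI[of _ "j + h"]) auto
  next
    case False
    then show ?thesis
      using that h ring_pt_add_half_turn[OF h, of k "j - h"] by (intro bexI[of _ "j - h"]) auto
  qed
  show ?thesis
    unfolding antipodal_w_def
  proof
    fix x assume "x \<in> rings"
    then obtain k j where kj: "k \<in> {1..p}" "j \<in> {1..m}" "x = ring_pt k j"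
      unfolding rings_def by auto
    then obtain j' where j': "j' \<in> {1..m}" "ring_pt k j' = - x"
      using opposite by blast
    have "- x \<in> rings"
      unfolding rings_def using kj j' by (auto intro!: image_eqI[of _ _ "(k, j')"])
    moreover have "w (- x) = w x"
      using kj j' weight_ring_pt by metis
    ultimately show "- x \<in> rings \<and> w (- x) = w x" ..
  qed
qed

lemma Wr_rings:
  assumes k: "k \<in> {1..p}"
  shows "Wr rings w (r k) = real m * W k"
proof -
  have "{x\<in>rings. norm x = r k} = (\<lambda>j. ring_pt k j) ` {1..m}"
  proof (intro equalityI subsetI)
    fix x assume "x \<in> {x\<in>rings. norm x = r k}"
    then obtain a j where a: "a \<in> {1..p}" "j \<in> {1..m}" "x = ring_pt a j" and "norm x = r k"
      unfolding rings_def by auto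
    then have "r a = r k"
      by (simp add: norm_ring_pt)
    then have "a = k"
      using k a(1) inj_onD[OF radius_inj] by blast
    then show "x \<in> (\<lambda>j. ring_pt k j) ` {1..m}"
      using a by blast
  next
    fix x assume "x \<in> (\<lambda>j. ring_pt k j) ` {1..m}"
    then obtain j where "j \<in> {1..m}" "x = ring_pt k j"
      by blast
    then show "x \<in> {x\<in>rings. norm x = r k}"
      unfolding rings_def using k by (auto simp: norm_ring_pt intro!: image_eqI[of _ _ "(k, j)"])
  qed
  moreover have "inj_on (\<lambda>j. ring_pt k j) {1..m}"
  proof (rule inj_onI)
    fix j j' assume "j \<in> {1..m}" "j' \<in> {1..m}" "ring_pt k j = ring_pt k j'"
    then show "j = j'"
      using inj_onD[OF inj_on_ring_pt, of "(k, j)" "(k, j')"] k by simp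
  qed
  ultimately have "Wr rings w (r k) = (\<Sum>j\<in>{1..m}. w (ring_pt k j))"
    unfolding Wr_def by (simp add: sum.reindex)
  then show ?thesis
    using k by (simp add: weight_ring_pt)
qed

lemma sum_rings_poly2:
  assumes t: "t < 2 * m"
  shows "(\<Sum>x\<in>rings. w x * poly2 t c x) =
    (\<Sum>i\<le>t. \<Sum>j\<le>t - i. c i j * real m *
       (circle_mean_coeff i j * (\<Sum>k\<in>{1..p}. W k * r k ^ (i + j)) +
        alias_coeff m i j * (\<Sum>k\<in>{1..p}. W k * (-1)^k * r k ^ (i + j))))"
proof -
  have "(\<Sum>x\<in>rings. w x * poly2 t c x) = (\<Sum>(k, j)\<in>{1..p} \<times> {1..m}. w (ring_pt k j) * poly2 t c (ring_pt k j))"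
    unfolding rings_def sum.reindex[OF inj_on_ring_pt] by (simp add: case_prod_beta)
  also have "\<dots> = (\<Sum>k\<in>{1..p}. W k * (\<Sum>j\<in>{1..m}.
      poly2 t c (pt2 (r k * cos (ring_angle m k j)) (r k * sin (ring_angle m k j)))))"
    unfolding sum.cartesian_product[symmetric] sum_distrib_left ring_pt_def[symmetric]
    by (intro sum.cong refl) (simp add: weight_ring_pt)
  also have "\<dots> = (\<Sum>k\<in>{1..p}. \<Sum>i\<le>t. \<Sum>j\<le>t - i.
      W k * (c i j * r k ^ (i + j) * (real m * (circle_mean_coeff i j + (-1)^k * alias_coeff m i j))))"
    by (simp only: sum_poly2_ring_angle[OF m_pos t] sum_distrib_left)
  also have "\<dots> = (\<Sum>i\<le>t. \<Sum>j\<le>t - i. c i j * real m *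
       (circle_mean_coeff i j * (\<Sum>k\<in>{1..p}. W k * r k ^ (i + j)) +
        alias_coeff m i j * (\<Sum>k\<in>{1..p}. W k * (-1)^k * r k ^ (i + j))))"
    unfolding sum_swap_triangle by (simp add: sum_distrib_left sum.distrib algebra_simps)
  finally show ?thesis .
qed

lemma sum_circle_avg_rings:
  "(\<Sum>\<rho>\<in>norm ` rings. Wr rings w \<rho> * circle_avg \<rho> (poly2 t c)) =
    (\<Sum>i\<le>t. \<Sum>j\<le>t - i. c i j * real m * (circle_mean_coeff i j * (\<Sum>k\<in>{1..p}. W k * r k ^ (i + j))))"
proof -
  have "(\<Sum>\<rho>\<in>norm ` rings. Wr rings w \<rho> * circle_avg \<rho> (poly2 t c)) =
      (\<Sum>k\<in>{1..p}. Wr rings w (r k) * circle_avg (r k) (poly2 t c))"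
    unfolding norm_rings sum.reindex[OF radius_inj] by simp
  also have "\<dots> = (\<Sum>k\<in>{1..p}. \<Sum>i\<le>t. \<Sum>j\<le>t - i. real m * W k * (c i j * r k ^ (i + j) * circle_mean_coeff i j))"
    by (intro sum.cong refl) (simp add: Wr_rings circle_avg_poly2 sum_distrib_left)
  also have "\<dots> = (\<Sum>i\<le>t. \<Sum>j\<le>t - i. c i j * real m * (circle_mean_coeff i j * (\<Sum>k\<in>{1..p}. W k * r k ^ (i + j))))"
    unfolding sum_swap_triangle by (simp add: sum_distrib_left mult_ac)
  finally show ?thesis .
qed

lemma design_equation_rings:
  assumes t: "t < 2 * m"
    and moments: "\<And>s. m + 2 * s \<le> t \<Longrightarrow> (\<Sum>k\<in>{1..p}. W k * (-1)^k * r k ^ (m + 2 * s)) = 0"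
  shows "(\<Sum>\<rho>\<in>norm ` rings. Wr rings w \<rho> * circle_avg \<rho> (poly2 t c)) = (\<Sum>x\<in>rings. w x * poly2 t c x)"
  unfolding sum_circle_avg_rings sum_rings_poly2[OF t]
proof (intro sum.cong refl)
  fix i j assume "i \<in> {..t}" "j \<in> {..t - i}"
  then have deg: "i + j \<le> t"
    by simp
  have "alias_coeff m i j * (\<Sum>k\<in>{1..p}. W k * (-1)^k * r k ^ (i + j)) = 0"
  proof (cases "alias_coeff m i j = 0")
    case False
    then obtain s where "i + j = m + 2 * s"
      using alias_coeff_nonzero_degree[OF m_pos] deg t by (meson le_less_trans)
    then show ?thesis
      using moments deg by simp
  qed simp
  then show "c i j * real m * (circle_mean_coeff i j * (\<Sum>k\<in>{1..p}. W k * r k ^ (i + j))) =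
    c i j * real m * (circle_mean_coeff i j * (\<Sum>k\<in>{1..p}. W k * r k ^ (i + j)) +
        alias_coeff m i j * (\<Sum>k\<in>{1..p}. W k * (-1)^k * r k ^ (i + j)))"
    by simp
qed


lemma weights_pos_rings:
  assumes "\<And>k. k \<in> {1..p} \<Longrightarrow> 0 < W k"
  shows "\<forall>x\<in>rings. 0 < w x"
  using assms unfolding rings_def by (auto simp: weight_ring_pt)

lemma euclidean_design2_rings:
  assumes "t < 2 * m" and "\<And>k. k \<in> {1..p} \<Longrightarrow> 0 < W k"
    and "\<And>s. m + 2 * s \<le> t \<Longrightarrow> (\<Sum>k\<in>{1..p}. W k * (-1)^k * r k ^ (m + 2 * s)) = 0"
  shows "euclidean_design2 rings w t"
  unfolding euclidean_design2_def
  using assms finite_rings zero_notin_rings weights_pos_rings design_equation_rings by blast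
end

theorem mainTheorem2:
  fixes t p m :: nat and r :: "nat \<Rightarrow> real" and w :: "real ^ 2 \<Rightarrow> real"
    and b :: "nat \<Rightarrow> nat \<Rightarrow> real ^ 2" and B :: "(real ^ 2) set"
  assumes hp: "1 \<le> p" "p \<le> (t + 5) div 4"
    and hm: "m = t + 3 - 2 * p"
    and hr0: "0 < r 1"
    and hrmono: "\<forall>k\<in>{1..p}. \<forall>l\<in>{1..p}. k < l \<longrightarrow> r k < r l"
    and hb: "\<forall>k j. b k j = pt2 (r k * cos ((2 * real j + real k) / real m * pi))
                                 (r k * sin ((2 * real j + real k) / real m * pi))"
    and hB: "B = {b k j | k j. j \<in> {1..m} \<and> k \<in> {1..p}}"
    and hw: "\<forall>k\<in>{1..p}. \<forall>j\<in>{1..m}. w (b k j) =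
              (if k = 1 then 1 / r 1 ^ m
               else (-1) ^ k * (1 / r k ^ m) *
                    (\<Prod>l\<in>{2..p} - {k}. (r 1 ^ 2 - r l ^ 2) / (r k ^ 2 - r l ^ 2)))"
  shows "(\<forall>x\<in>B. w x > 0) \<and> (odd t \<longrightarrow> antipodal_w B w) \<and>
         tight_design2 B w t \<and> norm ` B = r ` {1..p}"
proof -
  have p_le: "4 * p \<le> t + 5"
    using hp(2) by (simp add: less_eq_div_iff_mult_less_eq)
  have mono: "strict_mono_on {1..p} r"
    using hrmono by (auto intro: strict_mono_onI)
  interpret concentric_rings m p r
  proof
    show "0 < m" "inj_on r {1..p}"
      using p_le hm strict_mono_on_imp_inj_on[OF mono] by simp_all
    show "0 < r k" if "k \<in> {1..p}" for k
      using strict_mono_on_pos[OF hr0 mono that] .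
  qed
  have b_eq: "b = ring_pt"
    using hb by (simp add: fun_eq_iff ring_pt_def ring_angle_def)
  interpret weighted_rings m p r w "tight_weight m p r"
    by unfold_locales (use hw in \<open>simp add: b_eq tight_weight_def\<close>)
  have B_eq: "B = rings"
    unfolding hB b_eq rings_def by auto blast
  have "\<forall>x\<in>B. w x > 0"
    unfolding B_eq using weights_pos_rings tight_weight_pos[OF hr0 mono] by blast
  moreover have "odd t \<longrightarrow> antipodal_w B w"
  proof
    assume "odd t"
    then have "even m"
      using hm p_le by presburger
    then show "antipodal_w B w"
      unfolding B_eq by (rule antipodal_rings)
  qed
  moreover have "euclidean_design2 B w t"
    unfolding B_eq
  proof (rule euclidean_design2_rings)
    show "t < 2 * m"
      using p_le hm by simp
    show "(\<Sum>k\<in>{1..p}. tight_weight m p r k * (-1)^k * r k ^ (m + 2 * s)) = 0" if "m + 2 * s \<le> t" for s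
      using that hm p_le by (intro tight_weight_alternating_moment[OF hr0 mono]) linarith
  qed (rule tight_weight_pos[OF hr0 mono])
  ultimately show ?thesis
    unfolding tight_design2_def B_eq norm_rings card_rings card_image[OF radius_inj]
    using Nbound_dim2[OF p_le] hm by simp
qed

end
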